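(* Let $P$ and $Q$ be irreducible transition matrices on the finite set $S$, both reversible with respect to $\pi$. If $P$ efficiency-dominates $Q$ and $P\ne Q$, then $\mathrm{trace}(P)<\mathrm{trace}(Q)$.
   Context: $S$ is a finite set, and $\pi$ is a probability distribution on $S$ with $\pi(x)>0$ for all $x$. A transition matrix $P$ is reversible with respect to $\pi$ if $\pi(x)P(x,y)=\pi(y)P(y,x)$ for all $x,y$; irreducible if every state can be reached from every other with positive probability in some number of steps. For a Markov chain $X_1,X_2,\dots$ with transition matrix $P$ and $X_1\sim\pi$, $v(f,P)=\lim_{N\to\infty}\frac1N\mathrm{Var}\big(\sum_{i=1}^N f(X_i)\big)$. $P$ efficiency-dominates $Q$ if $v(f,P)\le v(f,Q)$ for all $f:S\to\mathbb R$. *)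

theory Defs
  imports Complex_Main "HOL-Library.FuncSet"
begin

definition transition_matrix :: "('a::finite \<Rightarrow> 'a \<Rightarrow> real) \<Rightarrow> bool" where
  "transition_matrix P \<longleftrightarrow> (\<forall>x y. 0 \<le> P x y) \<and> (\<forall>x. (\<Sum>y\<in>UNIV. P x y) = 1)"

definition prob_distribution :: "('a::finite \<Rightarrow> real) \<Rightarrow> bool" where
  "prob_distribution \<pi> \<longleftrightarrow> (\<forall>x. 0 \<le> \<pi> x) \<and> (\<Sum>x\<in>UNIV. \<pi> x) = 1"

fun mat_pow :: "('a::finite \<Rightarrow> 'a \<Rightarrow> real) \<Rightarrow> nat \<Rightarrow> 'a \<Rightarrow> 'a \<Rightarrow> real" where
  "mat_pow P 0 = (\<lambda>x y. if x = y then 1 else 0)"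
| "mat_pow P (Suc n) = (\<lambda>x y. \<Sum>z\<in>UNIV. mat_pow P n x z * P z y)"

definition reversible_wrt :: "('a::finite \<Rightarrow> real) \<Rightarrow> ('a \<Rightarrow> 'a \<Rightarrow> real) \<Rightarrow> bool" where
  "reversible_wrt \<pi> P \<longleftrightarrow> (\<forall>x y. \<pi> x * P x y = \<pi> y * P y x)"

definition irreducible_tm :: "('a::finite \<Rightarrow> 'a \<Rightarrow> real) \<Rightarrow> bool" where
  "irreducible_tm P \<longleftrightarrow> (\<forall>x y. \<exists>n. 0 < mat_pow P n x y)"

definition trace_tm :: "('a::finite \<Rightarrow> 'a \<Rightarrow> real) \<Rightarrow> real" where
  "trace_tm P = (\<Sum>x\<in>UNIV. P x x)"

text \<open>Law of the path (X_1,...,X_N), indexed 0..N-1, of the chain with X_1 ~ pi.\<close>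
definition path_prob :: "('a::finite \<Rightarrow> real) \<Rightarrow> ('a \<Rightarrow> 'a \<Rightarrow> real) \<Rightarrow> nat \<Rightarrow> (nat \<Rightarrow> 'a) \<Rightarrow> real" where
  "path_prob \<pi> P N xs = \<pi> (xs 0) * (\<Prod>i<N - 1. P (xs i) (xs (Suc i)))"

definition path_expectation :: "('a::finite \<Rightarrow> real) \<Rightarrow> ('a \<Rightarrow> 'a \<Rightarrow> real) \<Rightarrow> nat \<Rightarrow> ((nat \<Rightarrow> 'a) \<Rightarrow> real) \<Rightarrow> real" where
  "path_expectation \<pi> P N g = (\<Sum>xs\<in>PiE {..<N} (\<lambda>_. UNIV). path_prob \<pi> P N xs * g xs)"

definition sum_variance :: "('a::finite \<Rightarrow> real) \<Rightarrow> ('a \<Rightarrow> 'a \<Rightarrow> real) \<Rightarrow> ('a \<Rightarrow> real) \<Rightarrow> nat \<Rightarrow> real" where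
  "sum_variance \<pi> P f N =
     path_expectation \<pi> P N (\<lambda>xs. (\<Sum>i<N. f (xs i))^2)
     - (path_expectation \<pi> P N (\<lambda>xs. \<Sum>i<N. f (xs i)))^2"

definition asymptotic_variance :: "('a::finite \<Rightarrow> real) \<Rightarrow> ('a \<Rightarrow> 'a \<Rightarrow> real) \<Rightarrow> ('a \<Rightarrow> real) \<Rightarrow> real" where
  "asymptotic_variance \<pi> P f = lim (\<lambda>N. sum_variance \<pi> P f N / real N)"

definition efficiency_dominates :: "('a::finite \<Rightarrow> real) \<Rightarrow> ('a \<Rightarrow> 'a \<Rightarrow> real) \<Rightarrow> ('a \<Rightarrow> 'a \<Rightarrow> real) \<Rightarrow> bool" where
  "efficiency_dominates \<pi> P Q \<longleftrightarrow> (\<forall>f. asymptotic_variance \<pi> P f \<le> asymptotic_variance \<pi> Q f)"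

end

(*
  For a stationary chain and a function h with Poisson solution u - P u = h, the sum of
  h(X_i) is a martingale with increments u(X_i) - (P u)(X_(i-1)) plus a bounded boundary
  term, so v(h, P) = <u,u> - <Pu,Pu> = 2 <h,u> - <h,h>, inner products in L2(pi).
  Take h = g - Q g, for which g itself is a Poisson solution for Q, and let u solve
  Poisson's equation for P (irreducibility of P makes I - P invertible on mean-zero
  functions). Dominance at h reads E(u,u) <= E(u,g) for the Dirichlet form
  E(f,k) = <f, k - P k>, which is symmetric and nonnegative; then
  E(g,g) >= 2 E(u,g) - E(u,u) >= E(u,g) = <g,g> - <g,Qg>, i.e. <g,Pg> <= <g,Qg> for all g.
  So pi(x) (Q x y - P x y) is a symmetric positive semidefinite matrix: its diagonal is
  nonnegative, whence trace P <= trace Q, and equal traces force a zero diagonal and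
  therefore P = Q.
*)
theory Submission
  imports Defs "HOL-Analysis.Analysis"
begin

section \<open>Inner products weighted by a stationary distribution\<close>

definition mat_vec :: "('a::finite \<Rightarrow> 'a \<Rightarrow> real) \<Rightarrow> ('a \<Rightarrow> real) \<Rightarrow> 'a \<Rightarrow> real" where
  "mat_vec P f = (\<lambda>x. \<Sum>y\<in>UNIV. P x y * f y)"

definition inner_pi :: "('a::finite \<Rightarrow> real) \<Rightarrow> ('a \<Rightarrow> real) \<Rightarrow> ('a \<Rightarrow> real) \<Rightarrow> real" where
  "inner_pi \<pi> f g = (\<Sum>x\<in>UNIV. \<pi> x * f x * g x)"

definition stationary :: "('a::finite \<Rightarrow> real) \<Rightarrow> ('a \<Rightarrow> 'a \<Rightarrow> real) \<Rightarrow> bool" where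
  "stationary \<pi> P \<longleftrightarrow> (\<forall>y. (\<Sum>x\<in>UNIV. \<pi> x * P x y) = \<pi> y)"

lemma inner_pi_commute: "inner_pi \<pi> f g = inner_pi \<pi> g f"
  unfolding inner_pi_def by (simp add: ac_simps)

lemma inner_pi_diff_left: "inner_pi \<pi> (\<lambda>x. f x - g x) k = inner_pi \<pi> f k - inner_pi \<pi> g k"
  unfolding inner_pi_def by (simp add: algebra_simps sum_subtractf)

lemma inner_pi_diff_right: "inner_pi \<pi> k (\<lambda>x. f x - g x) = inner_pi \<pi> k f - inner_pi \<pi> k g"
  unfolding inner_pi_def by (simp add: algebra_simps sum_subtractf)

lemma mat_vec_diff: "mat_vec P (\<lambda>x. f x - g x) = (\<lambda>x. mat_vec P f x - mat_vec P g x)"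
  unfolding mat_vec_def by (simp add: algebra_simps sum_subtractf)

lemma transition_matrix_nonneg: "transition_matrix P \<Longrightarrow> 0 \<le> P x y"
  and transition_matrix_row_sum: "transition_matrix P \<Longrightarrow> (\<Sum>y\<in>UNIV. P x y) = 1"
  unfolding transition_matrix_def by auto

lemma reversible_imp_stationary:
  assumes "transition_matrix P" "reversible_wrt \<pi> P"
  shows "stationary \<pi> P"
  unfolding stationary_def
proof
  fix y
  have "(\<Sum>x\<in>UNIV. \<pi> x * P x y) = (\<Sum>x\<in>UNIV. \<pi> y * P y x)"
    using assms(2) unfolding reversible_wrt_def by simp
  also have "\<dots> = \<pi> y"
    by (simp add: transition_matrix_row_sum[OF assms(1)] flip: sum_distrib_left)
  finally show "(\<Sum>x\<in>UNIV. \<pi> x * P x y) = \<pi> y" .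
qed

lemma reversible_inner_pi_mat_vec:
  assumes "reversible_wrt \<pi> P"
  shows "inner_pi \<pi> f (mat_vec P g) = inner_pi \<pi> (mat_vec P f) g"
proof -
  have "inner_pi \<pi> f (mat_vec P g) = (\<Sum>x\<in>UNIV. \<Sum>y\<in>UNIV. (\<pi> x * P x y) * f x * g y)"
    unfolding inner_pi_def mat_vec_def by (simp add: sum_distrib_left ac_simps)
  also have "\<dots> = (\<Sum>x\<in>UNIV. \<Sum>y\<in>UNIV. (\<pi> y * P y x) * f x * g y)"
    using assms unfolding reversible_wrt_def by simp
  also have "\<dots> = (\<Sum>y\<in>UNIV. \<Sum>x\<in>UNIV. (\<pi> y * P y x) * f x * g y)"
    by (rule sum.swap)
  also have "\<dots> = inner_pi \<pi> (mat_vec P f) g"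
    unfolding inner_pi_def mat_vec_def by (simp add: sum_distrib_left sum_distrib_right ac_simps)
  finally show ?thesis .
qed

lemma stationary_sum_mat_vec:
  assumes "stationary \<pi> P"
  shows "(\<Sum>x\<in>UNIV. \<pi> x * mat_vec P f x) = (\<Sum>x\<in>UNIV. \<pi> x * f x)"
proof -
  have "(\<Sum>x\<in>UNIV. \<pi> x * mat_vec P f x) = (\<Sum>x\<in>UNIV. \<Sum>y\<in>UNIV. \<pi> x * P x y * f y)"
    unfolding mat_vec_def by (simp add: sum_distrib_left ac_simps)
  also have "\<dots> = (\<Sum>y\<in>UNIV. \<Sum>x\<in>UNIV. \<pi> x * P x y * f y)"
    by (rule sum.swap)
  also have "\<dots> = (\<Sum>y\<in>UNIV. \<pi> y * f y)"
    using assms unfolding stationary_def by (simp flip: sum_distrib_right)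
  finally show ?thesis .
qed

lemma stationary_sum_mat_vec_square:
  assumes "stationary \<pi> P"
  shows "(\<Sum>x\<in>UNIV. \<pi> x * (\<Sum>y\<in>UNIV. P x y * (f y)\<^sup>2)) = inner_pi \<pi> f f"
  using stationary_sum_mat_vec[OF assms, of "\<lambda>y. (f y)\<^sup>2"]
  unfolding mat_vec_def inner_pi_def by (simp add: power2_eq_square ac_simps)

lemma dirichlet_form_eq:
  assumes "transition_matrix P" "stationary \<pi> P"
  shows "2 * (inner_pi \<pi> f f - inner_pi \<pi> f (mat_vec P f))
    = (\<Sum>x\<in>UNIV. \<Sum>y\<in>UNIV. \<pi> x * P x y * (f x - f y)\<^sup>2)"
proof -
  have "(\<Sum>x\<in>UNIV. \<Sum>y\<in>UNIV. \<pi> x * P x y * (f x - f y)\<^sup>2)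
     = (\<Sum>x\<in>UNIV. \<pi> x * (\<Sum>y\<in>UNIV. P x y) * (f x)\<^sup>2) + (\<Sum>x\<in>UNIV. \<pi> x * (\<Sum>y\<in>UNIV. P x y * (f y)\<^sup>2))
       - 2 * inner_pi \<pi> f (mat_vec P f)"
    unfolding inner_pi_def mat_vec_def power2_diff
    by (simp add: algebra_simps sum.distrib sum_subtractf sum_distrib_left sum_distrib_right)
  also have "\<dots> = 2 * (inner_pi \<pi> f f - inner_pi \<pi> f (mat_vec P f))"
    using stationary_sum_mat_vec_square[OF assms(2)]
    by (simp add: transition_matrix_row_sum[OF assms(1)] inner_pi_def power2_eq_square ac_simps)
  finally show ?thesis ..
qed

lemma dirichlet_form_nonneg:
  assumes "transition_matrix P" "stationary \<pi> P" "\<forall>x. 0 \<le> \<pi> x"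
  shows "inner_pi \<pi> f (mat_vec P f) \<le> inner_pi \<pi> f f"
proof -
  have "0 \<le> (\<Sum>x\<in>UNIV. \<Sum>y\<in>UNIV. \<pi> x * P x y * (f x - f y)\<^sup>2)"
    using assms(3) transition_matrix_nonneg[OF assms(1)] by (intro sum_nonneg) auto
  then show ?thesis
    unfolding dirichlet_form_eq[OF assms(1,2), symmetric] by simp
qed


section \<open>Poisson's equation\<close>

lemma mat_pow_nonneg: "transition_matrix P \<Longrightarrow> 0 \<le> mat_pow P n x y"
  by (induction n arbitrary: y) (auto simp: transition_matrix_nonneg intro!: sum_nonneg)

lemma eq_if_mat_pow_pos:
  assumes "transition_matrix P" and edge: "\<And>x y. 0 < P x y \<Longrightarrow> g x = g y"
    and "0 < mat_pow P n x y"
  shows "g x = g y"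
  using assms(3)
proof (induction n arbitrary: y)
  case 0
  then show ?case by (simp split: if_splits)
next
  case (Suc n)
  then obtain z where "0 < mat_pow P n x z * P z y"
    by (metis (no_types, lifting) mat_pow.simps(2) not_le sum_nonpos)
  then have "0 < mat_pow P n x z" "0 < P z y"
    using mat_pow_nonneg[OF assms(1)] transition_matrix_nonneg[OF assms(1)]
    by (simp_all add: zero_less_mult_iff less_le)
  then show ?case
    using Suc.IH edge by metis
qed

lemma harmonic_imp_constant:
  assumes pos: "\<forall>x. 0 < \<pi> x" and tm: "transition_matrix P" and "stationary \<pi> P"
    and "irreducible_tm P" and harmonic: "mat_vec P g = g"
  shows "g x = g y"
proof -
  have term_nonneg: "0 \<le> \<pi> x * P x y * (g x - g y)\<^sup>2" for x y
    using pos transition_matrix_nonneg[OF tm] by (simp add: less_imp_le)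
  have "(\<Sum>x\<in>UNIV. \<Sum>y\<in>UNIV. \<pi> x * P x y * (g x - g y)\<^sup>2) = 0"
    using dirichlet_form_eq[OF tm \<open>stationary \<pi> P\<close>, of g] harmonic by simp
  then have "\<pi> x * P x y * (g x - g y)\<^sup>2 = 0" for x y
    by (simp add: sum_nonneg_eq_0_iff sum_nonneg term_nonneg) blast
  then have "g x = g y" if "0 < P x y" for x y
    using that pos by (metis less_irrefl mult_eq_0_iff power_eq_0_iff right_minus_eq)
  moreover obtain n where "0 < mat_pow P n x y"
    using \<open>irreducible_tm P\<close> unfolding irreducible_tm_def by blast
  ultimately show ?thesis
    using eq_if_mat_pow_pos[OF tm] by blast
qed

text \<open>Adding the mean to \<open>I - P\<close> kills its kernel, the constants; a preimage of a
  mean-zero \<open>h\<close> under the resulting bijection solves Poisson's equation.\<close>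
lemma Poisson_equation_solvable:
  assumes "prob_distribution \<pi>" and pos: "\<forall>x. 0 < \<pi> x"
    and tm: "transition_matrix P" and stat: "stationary \<pi> P" and "irreducible_tm P"
    and mean_h: "(\<Sum>x\<in>UNIV. \<pi> x * h x) = 0"
  shows "\<exists>u. \<forall>x. u x - mat_vec P u x = h x"
proof -
  define mean where "mean g = (\<Sum>x\<in>UNIV. \<pi> x * g x)" for g :: "'a \<Rightarrow> real"
  define L where "L g = (\<lambda>x. g x - mat_vec P g x + mean g)" for g
  have sum_pi: "(\<Sum>x\<in>UNIV. \<pi> x) = 1"
    using assms(1) unfolding prob_distribution_def by simp
  have mean_const: "mean (\<lambda>_. c) = c" for c
    unfolding mean_def by (simp add: sum_pi flip: sum_distrib_right)
  have mean_L: "mean (L g) = mean g" for g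
    using stationary_sum_mat_vec[OF stat, of g]
    by (simp add: L_def mean_def algebra_simps sum.distrib sum_subtractf sum_pi flip: sum_distrib_right)
  have L_kernel: "g = (\<lambda>_. 0)" if "L g = (\<lambda>_. 0)" for g
  proof -
    have "mean g = 0"
      using mean_L[of g] mean_const[of 0] that by simp
    then have "mat_vec P g = g"
      using that unfolding L_def by (simp add: fun_eq_iff)
    then have const: "g x = g y" for x y
      using harmonic_imp_constant[OF pos tm stat \<open>irreducible_tm P\<close>] by blast
    then have "g = (\<lambda>_. g undefined)"
      by (auto simp: fun_eq_iff)
    then show ?thesis
      using \<open>mean g = 0\<close> mean_const by metis
  qed
  define F where "F v = vec_lambda (L (vec_nth v))" for v :: "real^'a"
  have "linear F"
    by (rule linearI)
      (simp_all add: F_def L_def mean_def mat_vec_def vec_eq_iff algebra_simps sum.distrib sum_distrib_left)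
  moreover have "inj F"
  proof (rule injI)
    fix v w
    assume "F v = F w"
    then have "L (vec_nth (v - w)) = (\<lambda>_. 0)"
      using \<open>linear F\<close> by (simp add: F_def L_def mean_def mat_vec_def vec_eq_iff fun_eq_iff algebra_simps sum_subtractf)
    then have "vec_nth (v - w) = (\<lambda>_. 0)"
      by (rule L_kernel)
    then show "v = w"
      by (simp add: vec_eq_iff fun_eq_iff)
  qed
  ultimately obtain v where "F v = vec_lambda h"
    by (metis linear_inj_imp_surj surjD)
  then have "L (vec_nth v) = h"
    by (simp add: F_def vec_eq_iff fun_eq_iff)
  moreover from this have "mean (vec_nth v) = 0"
    using mean_L mean_h unfolding mean_def by metis
  ultimately show ?thesis
    unfolding L_def by auto
qed

section \<open>Expectations over paths of the chain\<close>

lemma sum_PiE_lessThan_Suc: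
  "(\<Sum>xs\<in>PiE {..<Suc N} (\<lambda>_. UNIV). F xs)
    = (\<Sum>xs\<in>PiE {..<N} (\<lambda>_. UNIV::'a::finite set). \<Sum>y\<in>UNIV. F (xs(N := y)))"
proof -
  let ?ext = "\<lambda>(y, xs). xs(N := y)" and ?A = "PiE {..<N} (\<lambda>_. UNIV::'a set)"
  have "PiE {..<Suc N} (\<lambda>_. UNIV) = ?ext ` (UNIV \<times> ?A)"
    by (simp add: lessThan_Suc PiE_insert_eq)
  moreover have "inj_on ?ext (UNIV \<times> ?A)"
    using inj_combinator[of N "{..<N}" "\<lambda>_. UNIV::'a set"] by simp
  ultimately have "(\<Sum>xs\<in>PiE {..<Suc N} (\<lambda>_. UNIV). F xs) = (\<Sum>(y, xs)\<in>UNIV \<times> ?A. F (xs(N := y)))"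
    by (simp add: sum.reindex case_prod_unfold)
  also have "\<dots> = (\<Sum>y\<in>UNIV. \<Sum>xs\<in>?A. F (xs(N := y)))"
    by (rule sum.cartesian_product[symmetric])
  also have "\<dots> = (\<Sum>xs\<in>?A. \<Sum>y\<in>UNIV. F (xs(N := y)))"
    by (rule sum.swap)
  finally show ?thesis .
qed

lemma path_prob_fun_upd_Suc:
  assumes "0 < N"
  shows "path_prob \<pi> P (Suc N) (xs(N := y)) = path_prob \<pi> P N xs * P (xs (N - 1)) y"
proof -
  obtain M where N: "N = Suc M"
    using assms by (cases N) auto
  show ?thesis
    unfolding path_prob_def N by (simp add: lessThan_Suc)
qed

lemma path_expectation_Suc:
  assumes "0 < N"
  shows "path_expectation \<pi> P (Suc N) F
    = path_expectation \<pi> P N (\<lambda>xs. \<Sum>y\<in>UNIV. P (xs (N - 1)) y * F (xs(N := y)))"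
  unfolding path_expectation_def sum_PiE_lessThan_Suc
  by (simp add: path_prob_fun_upd_Suc[OF assms] sum_distrib_left ac_simps)

lemma path_expectation_one: "path_expectation \<pi> P (Suc 0) (\<lambda>xs. k (xs 0)) = (\<Sum>x\<in>UNIV. \<pi> x * k x)"
  unfolding path_expectation_def sum_PiE_lessThan_Suc by (simp add: path_prob_def)

lemma path_expectation_add:
  "path_expectation \<pi> P N (\<lambda>xs. F xs + G xs) = path_expectation \<pi> P N F + path_expectation \<pi> P N G"
  unfolding path_expectation_def by (simp add: algebra_simps sum.distrib)

lemma path_expectation_mult_left:
  "path_expectation \<pi> P N (\<lambda>xs. c * F xs) = c * path_expectation \<pi> P N F"
  unfolding path_expectation_def by (simp add: algebra_simps sum_distrib_left)

lemma path_expectation_sum: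
  "path_expectation \<pi> P N (\<lambda>xs. \<Sum>i\<in>I. F i xs) = (\<Sum>i\<in>I. path_expectation \<pi> P N (F i))"
  unfolding path_expectation_def by (simp add: sum_distrib_left sum.swap[of _ I])

lemma path_prob_nonneg:
  "\<forall>x. 0 \<le> \<pi> x \<Longrightarrow> transition_matrix P \<Longrightarrow> 0 \<le> path_prob \<pi> P N xs"
  unfolding path_prob_def by (simp add: transition_matrix_nonneg prod_nonneg)

lemma path_expectation_mono:
  assumes "\<forall>x. 0 \<le> \<pi> x" "transition_matrix P" "\<And>xs. F xs \<le> G xs"
  shows "path_expectation \<pi> P N F \<le> path_expectation \<pi> P N G"
  unfolding path_expectation_def
  using assms by (auto intro!: sum_mono mult_left_mono path_prob_nonneg)

lemma path_expectation_Cauchy_Schwarz: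
  assumes "\<forall>x. 0 \<le> \<pi> x" "transition_matrix P"
  shows "(path_expectation \<pi> P N (\<lambda>xs. F xs * G xs))\<^sup>2
    \<le> path_expectation \<pi> P N (\<lambda>xs. (F xs)\<^sup>2) * path_expectation \<pi> P N (\<lambda>xs. (G xs)\<^sup>2)"
proof -
  let ?w = "\<lambda>xs. sqrt (path_prob \<pi> P N xs)"
  have weight: "?w xs * a * (?w xs * b) = path_prob \<pi> P N xs * (a * b)" for xs a b
  proof -
    have "?w xs * a * (?w xs * b) = (?w xs * ?w xs) * (a * b)"
      by (simp only: ac_simps)
    then show ?thesis
      using path_prob_nonneg[OF assms] by simp
  qed
  show ?thesis
    using Cauchy_Schwarz_ineq_sum[of "\<lambda>xs. ?w xs * F xs" "\<lambda>xs. ?w xs * G xs"]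
    unfolding path_expectation_def power2_eq_square weight .
qed

lemma path_expectation_extend:
  assumes "transition_matrix P" "0 < N" "\<And>xs y. F (xs(N := y)) = F xs"
  shows "path_expectation \<pi> P (Suc N) F = path_expectation \<pi> P N F"
  using assms by (simp add: path_expectation_Suc transition_matrix_row_sum flip: sum_distrib_right)

lemma path_expectation_last:
  assumes "stationary \<pi> P" "0 < N"
  shows "path_expectation \<pi> P N (\<lambda>xs. k (xs (N - 1))) = (\<Sum>x\<in>UNIV. \<pi> x * k x)"
  using assms(2)
proof (induction N arbitrary: k rule: nat_induct_non_zero)
  case 1
  then show ?case using path_expectation_one[of \<pi> P k] by simp
next
  case (Suc N)
  then have "path_expectation \<pi> P (Suc N) (\<lambda>xs. k (xs (Suc N - 1)))
      = path_expectation \<pi> P N (\<lambda>xs. mat_vec P k (xs (N - 1)))"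
    by (simp add: path_expectation_Suc mat_vec_def)
  also have "\<dots> = (\<Sum>x\<in>UNIV. \<pi> x * k x)"
    using Suc.IH[of "mat_vec P k"] stationary_sum_mat_vec[OF assms(1), of k] by simp
  finally show ?case .
qed

lemma path_expectation_coord:
  assumes "transition_matrix P" "stationary \<pi> P" "i < N"
  shows "path_expectation \<pi> P N (\<lambda>xs. k (xs i)) = (\<Sum>x\<in>UNIV. \<pi> x * k x)"
  using assms(3)
proof (induction N)
  case 0
  then show ?case by simp
next
  case (Suc N)
  show ?case
  proof (cases "i = N")
    case True
    then show ?thesis
      using path_expectation_last[OF assms(2), of "Suc N" k] by simp
  next
    case False
    with Suc.prems have "i < N"
      by simp
    then show ?thesis
      using path_expectation_extend[OF assms(1), of N "\<lambda>xs. k (xs i)"] Suc.IH by simp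
  qed
qed

lemma path_expectation_const:
  assumes "prob_distribution \<pi>" "stationary \<pi> P" "0 < N"
  shows "path_expectation \<pi> P N (\<lambda>_. c) = c"
  using path_expectation_last[OF assms(2,3), of "\<lambda>_. c"] assms(1)
  unfolding prob_distribution_def by (simp flip: sum_distrib_right)

section \<open>Asymptotic variance via the martingale decomposition\<close>

lemma tendsto_add_cross_term:
  fixes b m r :: "nat \<Rightarrow> real"
  assumes b: "b \<longlonglongrightarrow> c" and r: "r \<longlonglongrightarrow> 0"
    and cross: "\<forall>\<^sub>F n in sequentially. (m n)\<^sup>2 \<le> b n * r n"
  shows "(\<lambda>n. b n + 2 * m n + r n) \<longlonglongrightarrow> c"
proof -
  have "(\<lambda>n. sqrt (b n * r n)) \<longlonglongrightarrow> 0"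
    using tendsto_real_sqrt[OF tendsto_mult[OF b r]] by simp
  moreover have "\<forall>\<^sub>F n in sequentially. norm (m n) \<le> sqrt (b n * r n)"
    using cross by eventually_elim (metis real_norm_def real_sqrt_abs real_sqrt_le_mono)
  ultimately have "m \<longlonglongrightarrow> 0"
    by (rule Lim_null_comparison[rotated])
  then show ?thesis
    using tendsto_add[OF tendsto_add[OF b tendsto_mult_right_zero[of m sequentially 2]] r] by simp
qed

locale Poisson_solution =
  fixes \<pi> :: "'a::finite \<Rightarrow> real" and P :: "'a \<Rightarrow> 'a \<Rightarrow> real" and u h :: "'a \<Rightarrow> real"
  assumes prob: "prob_distribution \<pi>" and tm: "transition_matrix P" and stat: "stationary \<pi> P"
    and Poisson: "\<And>x. u x - mat_vec P u x = h x"
begin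

lemma pi_nonneg: "\<forall>x. 0 \<le> \<pi> x"
  using prob unfolding prob_distribution_def by simp

lemma mean_zero: "(\<Sum>x\<in>UNIV. \<pi> x * h x) = 0"
  using stationary_sum_mat_vec[OF stat, of u]
  by (simp add: Poisson[symmetric] right_diff_distrib sum_subtractf)

definition increment :: "'a \<Rightarrow> 'a \<Rightarrow> real" where
  "increment x y = u y - mat_vec P u x"

definition martingale :: "nat \<Rightarrow> (nat \<Rightarrow> 'a) \<Rightarrow> real" where
  "martingale N xs = (\<Sum>i\<in>{1..<N}. increment (xs (i - 1)) (xs i))"

definition boundary :: "nat \<Rightarrow> (nat \<Rightarrow> 'a) \<Rightarrow> real" where
  "boundary N xs = u (xs 0) - mat_vec P u (xs (N - 1))"

definition martingale_variance :: real where
  "martingale_variance = inner_pi \<pi> u u - inner_pi \<pi> (mat_vec P u) (mat_vec P u)"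

lemma martingale_Suc: "0 < N \<Longrightarrow> martingale (Suc N) xs = martingale N xs + increment (xs (N - 1)) (xs N)"
  unfolding martingale_def by (simp add: atLeastLessThanSuc)

lemma martingale_fun_upd: "martingale N (xs(N := y)) = martingale N xs"
  unfolding martingale_def by (intro sum.cong) auto

lemma sum_increment: "(\<Sum>y\<in>UNIV. P x y * increment x y) = 0"
proof -
  have "(\<Sum>y\<in>UNIV. P x y * increment x y) = mat_vec P u x - (\<Sum>y\<in>UNIV. P x y) * mat_vec P u x"
    unfolding increment_def by (simp add: mat_vec_def right_diff_distrib sum_subtractf sum_distrib_right)
  then show ?thesis
    by (simp add: transition_matrix_row_sum[OF tm])
qed

lemma sum_increment_sq:
  "(\<Sum>x\<in>UNIV. \<pi> x * (\<Sum>y\<in>UNIV. P x y * (increment x y)\<^sup>2)) = martingale_variance"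
proof -
  have "(\<Sum>y\<in>UNIV. P x y * (increment x y)\<^sup>2)
      = (\<Sum>y\<in>UNIV. P x y * (u y)\<^sup>2) - 2 * mat_vec P u x * (\<Sum>y\<in>UNIV. P x y * u y)
        + (\<Sum>y\<in>UNIV. P x y) * (mat_vec P u x)\<^sup>2" for x
    unfolding increment_def
    by (simp add: power2_diff algebra_simps sum_subtractf sum.distrib sum_distrib_left sum_distrib_right)
  then have "(\<Sum>y\<in>UNIV. P x y * (increment x y)\<^sup>2)
      = (\<Sum>y\<in>UNIV. P x y * (u y)\<^sup>2) - (mat_vec P u x)\<^sup>2" for x
    by (simp add: transition_matrix_row_sum[OF tm] power2_eq_square mat_vec_def)
  then show ?thesis
    using stationary_sum_mat_vec_square[OF stat, of u]
    by (simp add: martingale_variance_def inner_pi_def right_diff_distrib sum_subtractf power2_eq_square ac_simps)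
qed

lemma martingale_second_moment:
  "0 < N \<Longrightarrow> path_expectation \<pi> P N (\<lambda>xs. (martingale N xs)\<^sup>2) = (real N - 1) * martingale_variance"
proof (induction N rule: nat_induct_non_zero)
  case 1
  then show ?case
    by (simp add: martingale_def path_expectation_def)
next
  case (Suc N)
  have step: "(\<Sum>y\<in>UNIV. P x y * (m + increment x y)\<^sup>2) = m\<^sup>2 + (\<Sum>y\<in>UNIV. P x y * (increment x y)\<^sup>2)"
    for x m
    using sum_increment[of x]
    by (simp add: power2_sum algebra_simps sum.distrib transition_matrix_row_sum[OF tm]
        flip: sum_distrib_left sum_distrib_right)
  have "N - 1 \<noteq> N"
    using Suc.hyps by simp
  then have "path_expectation \<pi> P (Suc N) (\<lambda>xs. (martingale (Suc N) xs)\<^sup>2)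
      = path_expectation \<pi> P N (\<lambda>xs. (martingale N xs)\<^sup>2
          + (\<lambda>x. \<Sum>y\<in>UNIV. P x y * (increment x y)\<^sup>2) (xs (N - 1)))"
    using Suc.hyps by (simp add: path_expectation_Suc martingale_Suc martingale_fun_upd step)
  also have "\<dots> = (real N - 1) * martingale_variance + martingale_variance"
    using path_expectation_last[OF stat Suc.hyps, of "\<lambda>x. \<Sum>y\<in>UNIV. P x y * (increment x y)\<^sup>2"]
    by (simp add: path_expectation_add Suc.IH sum_increment_sq)
  finally show ?case
    by (simp add: algebra_simps)
qed

lemma sum_eq_martingale_plus_boundary:
  "0 < N \<Longrightarrow> (\<Sum>i<N. h (xs i)) = martingale N xs + boundary N xs"
proof (induction N rule: nat_induct_non_zero)
  case 1
  then show ?case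
    using Poisson[of "xs 0"] by (simp add: martingale_def boundary_def)
next
  case (Suc N)
  then show ?case
    using Poisson[of "xs N"] by (simp add: martingale_Suc increment_def boundary_def)
qed

lemma sum_variance_eq: "sum_variance \<pi> P h N = path_expectation \<pi> P N (\<lambda>xs. (\<Sum>i<N. h (xs i))\<^sup>2)"
  by (simp add: sum_variance_def path_expectation_sum path_expectation_coord[OF tm stat] mean_zero)

lemma martingale_second_moment_tendsto:
  "(\<lambda>N. path_expectation \<pi> P N (\<lambda>xs. (martingale N xs)\<^sup>2) / real N) \<longlonglongrightarrow> martingale_variance"
proof -
  have "(\<lambda>N. martingale_variance - martingale_variance / real N) \<longlonglongrightarrow> martingale_variance"
    using tendsto_diff[OF tendsto_const lim_const_over_n] by simp
  moreover have "\<forall>\<^sub>F N in sequentially. martingale_variance - martingale_variance / real N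
      = path_expectation \<pi> P N (\<lambda>xs. (martingale N xs)\<^sup>2) / real N"
    by (rule eventually_sequentiallyI[of 1]) (simp add: martingale_second_moment field_simps)
  ultimately show ?thesis
    by (rule Lim_transform_eventually)
qed

lemma boundary_second_moment_tendsto:
  "(\<lambda>N. path_expectation \<pi> P N (\<lambda>xs. (boundary N xs)\<^sup>2) / real N) \<longlonglongrightarrow> 0"
proof -
  define K where "K = Max (range (\<lambda>(a, b). (u a - mat_vec P u b)\<^sup>2))"
  have K: "(boundary N xs)\<^sup>2 \<le> K" for N xs
    unfolding K_def boundary_def by (rule Max_ge) auto
  have "0 \<le> path_expectation \<pi> P N (\<lambda>xs. (boundary N xs)\<^sup>2) / real N" for N
    using path_expectation_mono[OF pi_nonneg tm, of "\<lambda>_. 0" "\<lambda>xs. (boundary N xs)\<^sup>2" N]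
    by (simp add: path_expectation_def)
  moreover have "path_expectation \<pi> P N (\<lambda>xs. (boundary N xs)\<^sup>2) / real N \<le> K / real N" if "0 < N" for N
    using path_expectation_mono[OF pi_nonneg tm, of "\<lambda>xs. (boundary N xs)\<^sup>2" "\<lambda>_. K" N]
      path_expectation_const[OF prob stat that, of K] K
    by (simp add: divide_right_mono)
  ultimately show ?thesis
    by (intro tendsto_sandwich[OF _ _ tendsto_const lim_const_over_n[of K]])
      (auto intro!: eventually_sequentiallyI[of 1])
qed

theorem asymptotic_variance_eq: "asymptotic_variance \<pi> P h = martingale_variance"
proof -
  define E where "E N F = path_expectation \<pi> P N F / real N" for N F
  have "(E N (\<lambda>xs. martingale N xs * boundary N xs))\<^sup>2
      \<le> E N (\<lambda>xs. (martingale N xs)\<^sup>2) * E N (\<lambda>xs. (boundary N xs)\<^sup>2)" for N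
    using divide_right_mono[OF path_expectation_Cauchy_Schwarz[OF pi_nonneg tm], of "(real N)\<^sup>2"]
    by (simp add: E_def power_divide power2_eq_square)
  then have "(\<lambda>N. E N (\<lambda>xs. (martingale N xs)\<^sup>2) + 2 * E N (\<lambda>xs. martingale N xs * boundary N xs)
      + E N (\<lambda>xs. (boundary N xs)\<^sup>2)) \<longlonglongrightarrow> martingale_variance"
    using martingale_second_moment_tendsto boundary_second_moment_tendsto
    by (intro tendsto_add_cross_term) (simp_all add: E_def)
  moreover have "\<forall>\<^sub>F N in sequentially. E N (\<lambda>xs. (martingale N xs)\<^sup>2)
      + 2 * E N (\<lambda>xs. martingale N xs * boundary N xs) + E N (\<lambda>xs. (boundary N xs)\<^sup>2)
      = sum_variance \<pi> P h N / real N"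
    by (rule eventually_sequentiallyI[of 1])
      (simp add: sum_variance_eq sum_eq_martingale_plus_boundary E_def power2_sum
        path_expectation_add path_expectation_mult_left add_divide_distrib mult.assoc)
  ultimately have "(\<lambda>N. sum_variance \<pi> P h N / real N) \<longlonglongrightarrow> martingale_variance"
    by (rule Lim_transform_eventually)
  then show ?thesis
    unfolding asymptotic_variance_def by (rule limI)
qed

lemma asymptotic_variance_eq_inner_pi:
  "asymptotic_variance \<pi> P h = 2 * inner_pi \<pi> h u - inner_pi \<pi> h h"
proof -
  have "mat_vec P u = (\<lambda>x. u x - h x)"
    using Poisson by (auto simp: fun_eq_iff algebra_simps)
  then show ?thesis
    by (simp add: asymptotic_variance_eq martingale_variance_def inner_pi_def power2_eq_square
        algebra_simps sum_subtractf sum.distrib sum_distrib_left)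
qed

end

section \<open>Positive semidefinite quadratic forms\<close>

definition quadratic_form :: "('a::finite \<Rightarrow> 'a \<Rightarrow> real) \<Rightarrow> ('a \<Rightarrow> real) \<Rightarrow> real" where
  "quadratic_form A g = (\<Sum>x\<in>UNIV. \<Sum>y\<in>UNIV. g x * A x y * g y)"

lemma quadratic_form_eq: "quadratic_form A g = (\<Sum>x\<in>UNIV. g x * (\<Sum>y\<in>UNIV. A x y * g y))"
  unfolding quadratic_form_def by (simp add: sum_distrib_left ac_simps)

lemma quadratic_form_indicator: "quadratic_form A (\<lambda>x. of_bool (x = a)) = A a a"
  unfolding quadratic_form_eq by simp

lemma quadratic_form_two_points:
  assumes "a \<noteq> b"
  shows "quadratic_form A (\<lambda>x. of_bool (x = a) + t * of_bool (x = b))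
    = A a a + t * (A a b + A b a) + t\<^sup>2 * A b b"
proof -
  have "(\<Sum>y\<in>UNIV. A x y * (of_bool (y = a) + t * of_bool (y = b))) = A x a + t * A x b" for x
    by (simp add: sum.distrib distrib_left mult.left_commute[of _ t] flip: sum_distrib_left)
  then have "quadratic_form A (\<lambda>x. of_bool (x = a) + t * of_bool (x = b))
      = A a a + t * A a b + t * (A b a + t * A b b)"
    unfolding quadratic_form_eq using assms
    by (simp add: sum.distrib distrib_right mult.assoc flip: sum_distrib_left)
  then show ?thesis
    by (simp add: algebra_simps power2_eq_square)
qed

lemma psd_zero_diag_eq_0:
  fixes A :: "'a::finite \<Rightarrow> 'a \<Rightarrow> real"
  assumes psd: "\<And>g. 0 \<le> quadratic_form A g"
    and sym: "\<And>x y. A x y = A y x" and diag: "\<And>x. A x x = 0"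
  shows "A a b = 0"
proof (cases "a = b")
  case False
  then show ?thesis
    using psd[of "\<lambda>x. of_bool (x = a) + of_bool (x = b)"] psd[of "\<lambda>x. of_bool (x = a) - of_bool (x = b)"]
      quadratic_form_two_points[OF False, of A 1] quadratic_form_two_points[OF False, of A "-1"]
    by (simp add: diag sym[of b a])
qed (simp add: diag)

lemma efficiency_dominates_imp_inner_pi_le:
  assumes prob: "prob_distribution \<pi>" and pos: "\<forall>x. 0 < \<pi> x"
    and tmP: "transition_matrix P" and tmQ: "transition_matrix Q" and "irreducible_tm P"
    and revP: "reversible_wrt \<pi> P" and revQ: "reversible_wrt \<pi> Q"
    and dom: "efficiency_dominates \<pi> P Q"
  shows "inner_pi \<pi> g (mat_vec P g) \<le> inner_pi \<pi> g (mat_vec Q g)"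
proof -
  define h where "h x = g x - mat_vec Q g x" for x
  have statP: "stationary \<pi> P" and statQ: "stationary \<pi> Q"
    using reversible_imp_stationary tmP tmQ revP revQ by blast+
  have "(\<Sum>x\<in>UNIV. \<pi> x * h x) = 0"
    using stationary_sum_mat_vec[OF statQ, of g] by (simp add: h_def right_diff_distrib sum_subtractf)
  then obtain u where u: "\<And>x. u x - mat_vec P u x = h x"
    using Poisson_equation_solvable[OF prob pos tmP statP \<open>irreducible_tm P\<close>] by blast
  have "asymptotic_variance \<pi> P h = 2 * inner_pi \<pi> h u - inner_pi \<pi> h h"
    by (intro Poisson_solution.asymptotic_variance_eq_inner_pi Poisson_solution.intro prob tmP statP u)
  moreover have "asymptotic_variance \<pi> Q h = 2 * inner_pi \<pi> h g - inner_pi \<pi> h h"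
    by (intro Poisson_solution.asymptotic_variance_eq_inner_pi Poisson_solution.intro prob tmQ statQ)
      (simp add: h_def)
  ultimately have "inner_pi \<pi> h u \<le> inner_pi \<pi> h g"
    using dom unfolding efficiency_dominates_def by (metis add_le_cancel_right mult_le_cancel_left_pos
        diff_conv_add_uminus zero_less_numeral)
  moreover have "inner_pi \<pi> h u = inner_pi \<pi> u u - inner_pi \<pi> u (mat_vec P u)"
    using u inner_pi_diff_left[of \<pi> u "mat_vec P u" u] inner_pi_commute[of \<pi> "mat_vec P u" u]
    by (simp add: h_def[symmetric] fun_eq_iff)
  moreover have "inner_pi \<pi> h g = inner_pi \<pi> u g - inner_pi \<pi> u (mat_vec P g)"
    using u inner_pi_diff_left[of \<pi> u "mat_vec P u" g] reversible_inner_pi_mat_vec[OF revP, of u g]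
    by (simp add: h_def[symmetric] fun_eq_iff)
  moreover have "inner_pi \<pi> h g = inner_pi \<pi> g g - inner_pi \<pi> g (mat_vec Q g)"
    unfolding h_def inner_pi_diff_left by (simp add: inner_pi_commute[of \<pi> "mat_vec Q g" g])
  moreover have "inner_pi \<pi> (\<lambda>x. g x - u x) (mat_vec P (\<lambda>x. g x - u x))
      \<le> inner_pi \<pi> (\<lambda>x. g x - u x) (\<lambda>x. g x - u x)"
    using pos by (intro dirichlet_form_nonneg tmP statP) (simp add: less_imp_le)
  ultimately show ?thesis
    unfolding mat_vec_diff inner_pi_diff_left inner_pi_diff_right
    using inner_pi_commute[of \<pi> g u] reversible_inner_pi_mat_vec[OF revP, of g u]
      inner_pi_commute[of \<pi> "mat_vec P g" u]
    by linarith
qed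

lemma inner_pi_le_imp_trace_lt:
  assumes pos: "\<forall>x. 0 < \<pi> x" and "reversible_wrt \<pi> P" "reversible_wrt \<pi> Q"
    and le: "\<And>g. inner_pi \<pi> g (mat_vec P g) \<le> inner_pi \<pi> g (mat_vec Q g)" and "P \<noteq> Q"
  shows "trace_tm P < trace_tm Q"
proof -
  define A where "A x y = \<pi> x * (Q x y - P x y)" for x y
  have psd: "0 \<le> quadratic_form A g" for g
    using le[of g] by (simp add: A_def quadratic_form_def inner_pi_def mat_vec_def algebra_simps
        sum_subtractf sum_distrib_left)
  have sym: "A x y = A y x" for x y
    using assms(2,3) by (simp add: A_def reversible_wrt_def right_diff_distrib)
  have diag: "P x x \<le> Q x x" for x
    using psd[of "\<lambda>y. of_bool (y = x)"] pos
    by (simp add: quadratic_form_indicator A_def zero_le_mult_iff) (meson not_le)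
  then have "trace_tm P \<le> trace_tm Q"
    unfolding trace_tm_def by (rule sum_mono)
  moreover have "trace_tm P \<noteq> trace_tm Q"
  proof
    assume "trace_tm P = trace_tm Q"
    then have "(\<Sum>x\<in>UNIV. Q x x - P x x) = 0"
      by (simp add: trace_tm_def sum_subtractf)
    then have "A x x = 0" for x
      using diag by (simp add: A_def sum_nonneg_eq_0_iff)
    then have "A x y = 0" for x y
      using psd_zero_diag_eq_0 psd sym by blast
    then have "P = Q"
      using pos by (auto simp: A_def fun_eq_iff) (metis less_irrefl)
    then show False
      using \<open>P \<noteq> Q\<close> by contradiction
  qed
  ultimately show ?thesis
    by simp
qed

theorem theorem7:
  fixes \<pi> :: "'a::finite \<Rightarrow> real" and P Q :: "'a \<Rightarrow> 'a \<Rightarrow> real"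
  assumes "prob_distribution \<pi>" and "\<forall>x. 0 < \<pi> x"
    and "transition_matrix P" and "transition_matrix Q"
    and "irreducible_tm P" and "irreducible_tm Q"
    and "reversible_wrt \<pi> P" and "reversible_wrt \<pi> Q"
    and "efficiency_dominates \<pi> P Q" and "P \<noteq> Q"
  shows "trace_tm P < trace_tm Q"
  using efficiency_dominates_imp_inner_pi_le[OF assms(1-5,7-9)]
  by (rule inner_pi_le_imp_trace_lt[OF assms(2,7,8) _ assms(10)])

end
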